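(* Let $(E,\rho)$ be a complete partial $v$-generalized metric space and let $S:E\to E$ satisfy $\rho(Su,Sw)\le\lambda\max\{\rho(u,w),\rho(u,Su),\rho(w,Sw)\}$ for all $u,w\in E$, where $\lambda\in[0,1)$. Then $S$ has a unique fixed point $b\in E$, and $\rho(b,b)=0$.
   Context: Let $E$ be a nonempty set and $v\in\mathbb{N}$. $(E,\rho)$, with $\rho:E\times E\to[0,\infty)$, is a partial $v$-generalized metric space if for all $u,w,z_1,\dots,z_v\in E$: (1) $u=w$ iff $\rho(u,u)=\rho(u,w)=\rho(w,w)$; (2) $\rho(u,u)\le\rho(u,w)$; (3) $\rho(u,w)=\rho(w,u)$; (4) $\rho(u,w)\le\rho(u,z_1)+\rho(z_1,z_2)+\dots+\rho(z_{v-1},z_v)+\rho(z_v,w)-\sum_{i=1}^v\rho(z_i,z_i)$. A sequence $\{u_n\}$ in $E$ converges to $u\in E$ if $\lim_{n\to\infty}\rho(u_n,u)=\rho(u,u)$; it is Cauchy if $\lim_{n,m\to\infty}\rho(u_n,u_m)$ exists and is finite. $(E,\rho)$ is complete if for every Cauchy sequence $\{u_n\}$ there is $u\in E$ with $\lim_{n,m\to\infty}\rho(u_n,u_m)=\lim_{n\to\infty}\rho(u_n,u)=\rho(u,u)$. *)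

theory Defs
  imports "HOL-Analysis.Analysis"
begin

definition partial_vgen_metric :: "'a set \<Rightarrow> nat \<Rightarrow> ('a \<Rightarrow> 'a \<Rightarrow> real) \<Rightarrow> bool" where
  "partial_vgen_metric E v \<rho> \<longleftrightarrow>
     E \<noteq> {} \<and> v \<ge> 1 \<and>
     (\<forall>u\<in>E. \<forall>w\<in>E. \<rho> u w \<ge> 0) \<and>
     (\<forall>u\<in>E. \<forall>w\<in>E. u = w \<longleftrightarrow> (\<rho> u u = \<rho> u w \<and> \<rho> u w = \<rho> w w)) \<and>
     (\<forall>u\<in>E. \<forall>w\<in>E. \<rho> u u \<le> \<rho> u w) \<and>
     (\<forall>u\<in>E. \<forall>w\<in>E. \<rho> u w = \<rho> w u) \<and>
     (\<forall>u\<in>E. \<forall>w\<in>E. \<forall>z. (\<forall>i\<in>{1..v}. z i \<in> E) \<longrightarrow>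
        \<rho> u w \<le> \<rho> u (z 1) + (\<Sum>i=1..<v. \<rho> (z i) (z (Suc i))) + \<rho> (z v) w
                  - (\<Sum>i=1..v. \<rho> (z i) (z i)))"

definition pvg_cauchy :: "('a \<Rightarrow> 'a \<Rightarrow> real) \<Rightarrow> (nat \<Rightarrow> 'a) \<Rightarrow> bool" where
  "pvg_cauchy \<rho> u \<longleftrightarrow> (\<exists>L::real. ((\<lambda>(n,m). \<rho> (u n) (u m)) \<longlongrightarrow> L) (sequentially \<times>\<^sub>F sequentially))"

definition pvg_complete :: "'a set \<Rightarrow> ('a \<Rightarrow> 'a \<Rightarrow> real) \<Rightarrow> bool" where
  "pvg_complete E \<rho> \<longleftrightarrow>
     (\<forall>u. (\<forall>n. u n \<in> E) \<and> pvg_cauchy \<rho> u \<longrightarrow>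
        (\<exists>x\<in>E. ((\<lambda>(n,m). \<rho> (u n) (u m)) \<longlongrightarrow> \<rho> x x) (sequentially \<times>\<^sub>F sequentially)
               \<and> ((\<lambda>n. \<rho> (u n) x) \<longlonglongrightarrow> \<rho> x x)))"

end

theory Submission
  imports Defs
begin

text \<open>The Picard iterates \<open>S\<^sup>n u\<close> have geometrically decreasing steps: in the
  contraction condition for \<open>S\<^sup>n u\<close> and \<open>S\<^sup>n\<^sup>+\<^sup>1 u\<close> the maximum is one of two
  consecutive steps, and when it is the later one that step vanishes. Taking all
  intermediate points \<open>z\<^sub>i = y\<close> in the \<open>v\<close>-gon inequality gives the partial-metric
  triangle inequality, so the mutual distances of the iterates tend to \<open>0\<close>, and
  completeness yields a limit \<open>b\<close> with \<open>\<rho>(b, b) = 0\<close>. Letting \<open>n \<rightarrow> \<infinity>\<close> in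
  \<open>\<rho>(b, Sb) \<le> \<rho>(b, S\<^sup>n\<^sup>+\<^sup>1 u) + \<lambda> max{\<rho>(S\<^sup>n u, b), \<rho>(S\<^sup>n u, S\<^sup>n\<^sup>+\<^sup>1 u), \<rho>(b, Sb)}\<close>
  gives \<open>\<rho>(b, Sb) \<le> \<lambda> \<rho>(b, Sb)\<close>, hence \<open>Sb = b\<close>. For two fixed points \<open>b\<close>, \<open>c\<close> the
  maximum is \<open>\<rho>(b, c)\<close>, so again \<open>\<rho>(b, c) = 0\<close> and \<open>b = c\<close>.\<close>

lemma le_mult_self_imp_eq_0:
  fixes r lam :: real
  assumes "0 \<le> r" "r \<le> lam * r" "lam < 1"
  shows "r = 0"
  using assms mult_le_cancel_right1[of r lam] by linarith

lemma tendsto_prod_sequentially_zero_if_le_min: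
  fixes f :: "nat \<Rightarrow> nat \<Rightarrow> real"
  assumes "\<And>n m. 0 \<le> f n m" "\<And>n m. f n m \<le> g (min n m)" "g \<longlonglongrightarrow> 0"
  shows "((\<lambda>(n, m). f n m) \<longlongrightarrow> 0) (sequentially \<times>\<^sub>F sequentially)"
proof -
  have "filterlim (\<lambda>(n, m). min n m) sequentially (sequentially \<times>\<^sub>F sequentially)"
    unfolding filterlim_at_top eventually_prod_sequentially by auto
  from filterlim_compose[OF assms(3) this]
  have upper: "((\<lambda>(n, m). g (min n m)) \<longlongrightarrow> 0) (sequentially \<times>\<^sub>F sequentially)"
    by (simp add: case_prod_beta')
  show ?thesis
    by (rule tendsto_sandwich[OF _ _ tendsto_const upper]) (auto intro: always_eventually simp: assms)
qed

locale partial_vgen_metric_space =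
  fixes E :: "'a set" and v :: nat and \<rho> :: "'a \<Rightarrow> 'a \<Rightarrow> real"
  assumes partial_vgen_metric: "partial_vgen_metric E v \<rho>"
begin

lemma nonempty: "E \<noteq> {}"
  and one_le_v: "1 \<le> v"
  using partial_vgen_metric unfolding partial_vgen_metric_def by simp_all

lemma nonneg: "u \<in> E \<Longrightarrow> w \<in> E \<Longrightarrow> 0 \<le> \<rho> u w"
  and eq_iff_self_dists: "u \<in> E \<Longrightarrow> w \<in> E \<Longrightarrow> u = w \<longleftrightarrow> \<rho> u u = \<rho> u w \<and> \<rho> u w = \<rho> w w"
  and self_le: "u \<in> E \<Longrightarrow> w \<in> E \<Longrightarrow> \<rho> u u \<le> \<rho> u w"
  and symmetric: "u \<in> E \<Longrightarrow> w \<in> E \<Longrightarrow> \<rho> u w = \<rho> w u"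
  using partial_vgen_metric unfolding partial_vgen_metric_def by simp_all

lemma polygon_inequality:
  assumes "u \<in> E" "w \<in> E" "\<And>i. i \<in> {1..v} \<Longrightarrow> z i \<in> E"
  shows "\<rho> u w \<le> \<rho> u (z 1) + (\<Sum>i=1..<v. \<rho> (z i) (z (Suc i))) + \<rho> (z v) w
                  - (\<Sum>i=1..v. \<rho> (z i) (z i))"
proof -
  have "\<forall>u\<in>E. \<forall>w\<in>E. \<forall>z. (\<forall>i\<in>{1..v}. z i \<in> E) \<longrightarrow>
      \<rho> u w \<le> \<rho> u (z 1) + (\<Sum>i=1..<v. \<rho> (z i) (z (Suc i))) + \<rho> (z v) w
                  - (\<Sum>i=1..v. \<rho> (z i) (z i))"
    using partial_vgen_metric unfolding partial_vgen_metric_def by (elim conjE) assumption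
  then show ?thesis
    using assms by blast
qed

lemma triangle:
  assumes "u \<in> E" "w \<in> E" "y \<in> E"
  shows "\<rho> u w \<le> \<rho> u y + \<rho> y w - \<rho> y y"
  using polygon_inequality[of u w "\<lambda>_. y"] assms one_le_v by (simp add: algebra_simps)

lemma triangle_le:
  assumes "u \<in> E" "w \<in> E" "y \<in> E"
  shows "\<rho> u w \<le> \<rho> u y + \<rho> y w"
  using triangle[OF assms] nonneg[OF assms(3,3)] by linarith

lemma eq_if_dist_eq_0:
  assumes "u \<in> E" "w \<in> E" "\<rho> u w = 0"
  shows "u = w"
proof -
  have "\<rho> u u = 0" "\<rho> w w = 0"
    using self_le[OF assms(1,2)] self_le[OF assms(2,1)] nonneg assms symmetric[OF assms(1,2)]
    by (simp_all add: order_antisym)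
  with assms show ?thesis
    by (simp add: eq_iff_self_dists)
qed

lemma dist_le_sum_steps:
  assumes "\<And>n. x n \<in> E"
  shows "\<rho> (x n) (x (n + Suc k)) \<le> (\<Sum>i\<le>k. \<rho> (x (n + i)) (x (Suc (n + i))))"
proof (induction k)
  case (Suc k)
  have "\<rho> (x n) (x (n + Suc (Suc k)))
      \<le> \<rho> (x n) (x (n + Suc k)) + \<rho> (x (n + Suc k)) (x (n + Suc (Suc k)))"
    by (rule triangle_le[OF assms assms assms])
  with Suc show ?case by simp
qed simp

lemma dist_le_geometric_tail:
  fixes lam :: real
  assumes "\<And>n. x n \<in> E" "0 \<le> lam" "lam < 1"
    and step: "\<And>n. \<rho> (x n) (x (Suc n)) \<le> c * lam ^ n"
  shows "\<rho> (x n) (x m) \<le> c / (1 - lam) * lam ^ min n m"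
proof -
  have "c \<ge> 0"
    using order.trans[OF nonneg[OF assms(1,1)] step[of 0]] by simp
  have tail: "\<rho> (x n) (x (n + Suc k)) \<le> c / (1 - lam) * lam ^ n" for n k
  proof -
    have "\<rho> (x n) (x (n + Suc k)) \<le> (\<Sum>i\<le>k. \<rho> (x (n + i)) (x (Suc (n + i))))"
      using dist_le_sum_steps[OF assms(1)] .
    also have "\<dots> \<le> (\<Sum>i\<le>k. c * lam ^ (n + i))"
      by (intro sum_mono step)
    also have "\<dots> = c * lam ^ n * (\<Sum>i<Suc k. lam ^ i)"
      by (simp add: power_add sum_distrib_left lessThan_Suc_atMost mult.assoc)
    also have "\<dots> = c * lam ^ n * ((1 - lam ^ Suc k) / (1 - lam))"
      using \<open>lam < 1\<close> by (simp only: sum_gp_strict) simp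
    also have "\<dots> \<le> c * lam ^ n * (1 / (1 - lam))"
      using \<open>c \<ge> 0\<close> assms(2,3) by (intro mult_left_mono divide_right_mono) auto
    also have "\<dots> = c / (1 - lam) * lam ^ n"
      by simp
    finally show ?thesis .
  qed
  consider "n < m" | "n = m" | "m < n" by linarith
  then show ?thesis
  proof cases
    case 1
    then show ?thesis
      using tail[of n "m - Suc n"] by simp
  next
    case 2
    then show ?thesis
      using self_le[OF assms(1,1), of n "Suc n"] tail[of n 0] by simp
  next
    case 3
    then show ?thesis
      using tail[of m "n - Suc m"] symmetric[OF assms(1,1), of n m] by simp
  qed
qed

lemma geometric_steps_imp_dist_tendsto_0:
  fixes lam :: real
  assumes "\<And>n. x n \<in> E" "0 \<le> lam" "lam < 1"
    and "\<And>n. \<rho> (x n) (x (Suc n)) \<le> c * lam ^ n"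
  shows "((\<lambda>(n, m). \<rho> (x n) (x m)) \<longlongrightarrow> 0) (sequentially \<times>\<^sub>F sequentially)"
proof (rule tendsto_prod_sequentially_zero_if_le_min)
  show "\<rho> (x n) (x m) \<le> c / (1 - lam) * lam ^ min n m" for n m
    by (rule dist_le_geometric_tail[OF assms])
  show "(\<lambda>k. c / (1 - lam) * lam ^ k) \<longlonglongrightarrow> 0"
    using assms(2,3) by (intro tendsto_mult_right_zero LIMSEQ_power_zero) simp
qed (simp add: nonneg assms(1))

end

locale max_contraction = partial_vgen_metric_space +
  fixes S :: "'a \<Rightarrow> 'a" and lam :: real
  assumes maps_into: "\<forall>u\<in>E. S u \<in> E"
    and lam_nonneg: "0 \<le> lam" and lam_less_1: "lam < 1"
    and contraction_Max: "\<forall>u\<in>E. \<forall>w\<in>E. \<rho> (S u) (S w) \<le> lam * Max {\<rho> u w, \<rho> u (S u), \<rho> w (S w)}"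
begin

lemma map_in: "u \<in> E \<Longrightarrow> S u \<in> E"
  using maps_into by blast

lemma iterate_in: "u \<in> E \<Longrightarrow> (S ^^ n) u \<in> E"
  by (induction n) (simp_all add: map_in)

lemma contraction:
  "u \<in> E \<Longrightarrow> w \<in> E \<Longrightarrow> \<rho> (S u) (S w) \<le> lam * max (\<rho> u w) (max (\<rho> u (S u)) (\<rho> w (S w)))"
  using contraction_Max by simp

lemma eq_0_if_le_lam_mult: "u \<in> E \<Longrightarrow> w \<in> E \<Longrightarrow> \<rho> u w \<le> lam * \<rho> u w \<Longrightarrow> \<rho> u w = 0"
  using le_mult_self_imp_eq_0[OF nonneg _ lam_less_1] by blast

lemma step_contracts:
  assumes "u \<in> E"
  shows "\<rho> (S u) (S (S u)) \<le> lam * \<rho> u (S u)"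
proof (cases "\<rho> u (S u) \<le> \<rho> (S u) (S (S u))")
  case True
  have "\<rho> (S u) (S (S u)) \<le> lam * \<rho> (S u) (S (S u))"
    using contraction[OF assms map_in[OF assms]] True by (simp add: max_def)
  then have "\<rho> (S u) (S (S u)) = 0"
    by (intro eq_0_if_le_lam_mult map_in assms)
  then show ?thesis
    using nonneg[OF assms map_in[OF assms]] lam_nonneg by simp
next
  case False
  then show ?thesis
    using contraction[OF assms map_in[OF assms]] by (simp add: max_def)
qed

lemma iterate_step_le:
  assumes "u \<in> E"
  shows "\<rho> ((S ^^ n) u) ((S ^^ Suc n) u) \<le> \<rho> u (S u) * lam ^ n"
proof (induction n)
  case (Suc n)
  have "\<rho> ((S ^^ Suc n) u) ((S ^^ Suc (Suc n)) u) \<le> lam * \<rho> ((S ^^ n) u) ((S ^^ Suc n) u)"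
    using step_contracts[OF iterate_in[OF assms]] by simp
  also have "\<dots> \<le> lam * (\<rho> u (S u) * lam ^ n)"
    using Suc lam_nonneg by (rule mult_left_mono)
  finally show ?case
    by (simp add: algebra_simps)
qed simp

lemma fixed_if_iterates_tendsto:
  assumes "u \<in> E" "b \<in> E" and lim: "(\<lambda>n. \<rho> ((S ^^ n) u) b) \<longlonglongrightarrow> 0"
  shows "S b = b"
proof -
  define x where "x n = (S ^^ n) u" for n
  define r where "r = \<rho> b (S b)"
  have xE: "x n \<in> E" for n
    unfolding x_def using iterate_in[OF assms(1)] .
  have SbE: "S b \<in> E"
    using map_in[OF assms(2)] .
  have "r \<ge> 0"
    unfolding r_def using nonneg[OF assms(2) SbE] .
  have lim_x: "(\<lambda>n. \<rho> (x n) b) \<longlonglongrightarrow> 0"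
    using lim unfolding x_def .
  have lim_x_Suc: "(\<lambda>n. \<rho> (x (Suc n)) b) \<longlonglongrightarrow> 0"
    using LIMSEQ_Suc[OF lim_x] .
  have steps: "(\<lambda>n. \<rho> (x n) (x (Suc n))) \<longlonglongrightarrow> 0"
  proof (rule tendsto_sandwich[OF always_eventually always_eventually])
    show "\<forall>n. 0 \<le> \<rho> (x n) (x (Suc n))"
      using nonneg[OF xE xE] by blast
    show "\<forall>n. \<rho> (x n) (x (Suc n)) \<le> \<rho> (x n) b + \<rho> (x (Suc n)) b"
      using triangle_le[OF xE xE assms(2)] symmetric[OF assms(2) xE] by simp
    show "(\<lambda>n. \<rho> (x n) b + \<rho> (x (Suc n)) b) \<longlonglongrightarrow> 0"
      using tendsto_add[OF lim_x lim_x_Suc] by simp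
  qed simp
  have bound: "r \<le> \<rho> (x (Suc n)) b + lam * max (\<rho> (x n) b) (max (\<rho> (x n) (x (Suc n))) r)" for n
  proof -
    have "r \<le> \<rho> b (x (Suc n)) + \<rho> (x (Suc n)) (S b)"
      unfolding r_def by (rule triangle_le[OF assms(2) SbE xE])
    also have "\<rho> (x (Suc n)) (S b) \<le> lam * max (\<rho> (x n) b) (max (\<rho> (x n) (x (Suc n))) r)"
      using contraction[OF xE assms(2), of n] unfolding r_def x_def by simp
    finally show ?thesis
      using symmetric[OF assms(2) xE] by simp
  qed
  have "(\<lambda>n. \<rho> (x (Suc n)) b + lam * max (\<rho> (x n) b) (max (\<rho> (x n) (x (Suc n))) r))
      \<longlonglongrightarrow> 0 + lam * max 0 (max 0 r)"
    by (intro tendsto_add tendsto_mult tendsto_max tendsto_const lim_x lim_x_Suc steps)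
  then have "r \<le> lam * max 0 (max 0 r)"
    using bound by (intro LIMSEQ_le_const) auto
  then have "\<rho> b (S b) = 0"
    using \<open>r \<ge> 0\<close> eq_0_if_le_lam_mult[OF assms(2) SbE] unfolding r_def by simp
  then show ?thesis
    using eq_if_dist_eq_0[OF assms(2) SbE] by simp
qed

lemma fixed_point_exists:
  assumes "pvg_complete E \<rho>"
  shows "\<exists>b\<in>E. S b = b"
proof -
  obtain u where "u \<in> E"
    using nonempty by blast
  let ?x = "\<lambda>n. (S ^^ n) u"
  have lim0: "((\<lambda>(n, m). \<rho> (?x n) (?x m)) \<longlongrightarrow> 0) (sequentially \<times>\<^sub>F sequentially)"
    using iterate_in[OF \<open>u \<in> E\<close>] lam_nonneg lam_less_1 iterate_step_le[OF \<open>u \<in> E\<close>]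
    by (rule geometric_steps_imp_dist_tendsto_0)
  then have "pvg_cauchy \<rho> ?x"
    unfolding pvg_cauchy_def by blast
  with iterate_in[OF \<open>u \<in> E\<close>] obtain b where "b \<in> E"
    and lim_pairs: "((\<lambda>(n, m). \<rho> (?x n) (?x m)) \<longlongrightarrow> \<rho> b b) (sequentially \<times>\<^sub>F sequentially)"
    and lim: "(\<lambda>n. \<rho> (?x n) b) \<longlonglongrightarrow> \<rho> b b"
    using assms[unfolded pvg_complete_def, rule_format, of ?x] by blast
  have "\<rho> b b = 0"
    using tendsto_unique[OF _ lim_pairs lim0] by (simp add: prod_filter_eq_bot)
  with lim have "S b = b"
    using fixed_if_iterates_tendsto[OF \<open>u \<in> E\<close> \<open>b \<in> E\<close>] by simp
  with \<open>b \<in> E\<close> show ?thesis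
    by blast
qed

lemma dist_fixed_points_eq_0:
  assumes "b \<in> E" "c \<in> E" "S b = b" "S c = c"
  shows "\<rho> b c = 0"
proof -
  have "max (\<rho> b c) (max (\<rho> b b) (\<rho> c c)) = \<rho> b c"
    using self_le[OF assms(1,2)] self_le[OF assms(2,1)] symmetric[OF assms(1,2)] by simp
  then have "\<rho> b c \<le> lam * \<rho> b c"
    using contraction[OF assms(1,2)] assms(3,4) by simp
  then show ?thesis
    by (rule eq_0_if_le_lam_mult[OF assms(1,2)])
qed

end

theorem mainTheorem7:
  fixes E :: "'a set" and v :: nat and \<rho> :: "'a \<Rightarrow> 'a \<Rightarrow> real"
    and S :: "'a \<Rightarrow> 'a" and lam :: real
  assumes "partial_vgen_metric E v \<rho>"
    and "pvg_complete E \<rho>"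
    and "\<forall>u\<in>E. S u \<in> E"
    and "0 \<le> lam" and "lam < 1"
    and "\<forall>u\<in>E. \<forall>w\<in>E. \<rho> (S u) (S w) \<le> lam * Max {\<rho> u w, \<rho> u (S u), \<rho> w (S w)}"
  shows "\<exists>b\<in>E. S b = b \<and> \<rho> b b = 0 \<and> (\<forall>c\<in>E. S c = c \<longrightarrow> c = b)"
proof -
  interpret max_contraction E v \<rho> S lam
    using assms by unfold_locales
  obtain b where b: "b \<in> E" "S b = b"
    using fixed_point_exists[OF assms(2)] by blast
  moreover have "\<rho> b b = 0"
    using dist_fixed_points_eq_0[OF b(1) b(1) b(2) b(2)] .
  moreover have "c = b" if "c \<in> E" "S c = c" for c
    using eq_if_dist_eq_0[OF that(1) b(1)] dist_fixed_points_eq_0[OF that(1) b(1) that(2) b(2)] by simp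
  ultimately show ?thesis
    by blast
qed

end
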